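(* Consider an ontological model with two-element ontic state space $\Lambda=\{0,1\}$. Four preparation procedures $P_T,P_{\tilde T},P_\eta,P_{\tilde\eta}$ are represented by probability distributions (epistemic states) $\mu_T,\mu_{\tilde T},\mu_\eta,\mu_{\tilde\eta}$ on $\Lambda$, and these satisfy the preparation-noncontextuality constraint $$\mu_T(i)+\mu_{\tilde T}(i)=\mu_\eta(i)+\mu_{\tilde\eta}(i)\qquad\text{for all } i\in\Lambda .$$ A binary two-copy comparison measurement $M_{\mathrm{swap}}$ with outcomes pass/fail is represented by the SWAP-like response function $\xi_{\mathrm{pass}}(i,j)$ on pairs of ontic states given by the matrix $$\Xi_q=\begin{pmatrix}1&q\\ q&1\end{pmatrix},\qquad q\in[0,1),$$ i.e. $\xi_{\mathrm{pass}}(i,i)=1$ and $\xi_{\mathrm{pass}}(i,j)=q$ for $i\neq j$. Assume further there is a sharp single-copy binary test $M_T=\{T,\tilde T\}$, represented by a response function $\xi_{T}:\Lambda\to[0,1]$ (with $\xi_{\tilde T}=1-\xi_T$), such that $$p(T|M_T,P_T)=\sum_i \xi_T(i)\mu_T(i)=1,\qquad p(T|M_T,P_{\tilde T})=\sum_i\xi_T(i)\mu_{\tilde T}(i)=0,$$ and let $c:=p(T|M_T,P_\eta)=\sum_i\xi_T(i)\mu_\eta(i)$ be the confusability. Let $\eta_1,\eta_2\ge0$ with $\eta_1+\eta_2=1$ be given priors. Define $$p_{\mathrm{pur}}=\sum_{i,j}\xi_{\mathrm{pass}}(i,j)\mu_T(i)\mu_T(j),\qquad p_{\mathrm{mix}}^{(p)}=\sum_{i,j}\xi_{\mathrm{pass}}(i,j)\mu_T(i)\mu^{(p)}_\eta(j),$$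 where for $p\in S_2$ (identity or swap), $\mu_\eta^{(\mathrm{id})}=\mu_\eta$ and $\mu_\eta^{(\mathrm{swap})}(i)=\mu_\eta(1-i)$, and define the operational discriminability score $$D_{\mathrm{op}}=\max_{p\in S_2}\Big[(2p_{\mathrm{mix}}^{(p)}-1)+2\sqrt{\eta_1\eta_2(1-p_{\mathrm{pur}})}\Big].$$ Then $$D_{\mathrm{op}}\le 1-2(1-q)\min\{c,1-c\}.$$ In particular, after relabeling so that $c\le\tfrac12$, $D_{\mathrm{op}}\le 1-2(1-q)c$.
   Context: In an ontological model each preparation $P$ is represented by a probability distribution $\mu_P$ on the ontic space $\Lambda$, each measurement outcome $k$ of a measurement $M$ by a response function $\xi_{k|M}(\lambda)\in[0,1]$ with $\sum_k\xi_{k|M}=1$, and operational probabilities are $p(k|M,P)=\sum_\lambda\xi_{k|M}(\lambda)\mu_P(\lambda)$. For two-copy measurements on independently prepared systems the pass probability is $\sum_{i,j}\xi_{\mathrm{pass}}(i,j)\mu_P(i)\mu_{P'}(j)$. The constraint $\mu_T+\mu_{\tilde T}=\mu_\eta+\mu_{\tilde\eta}$ expresses preparation noncontextuality applied to the operational equivalence $\tfrac12P_T+\tfrac12P_{\tilde T}\simeq\tfrac12P_\eta+\tfrac12P_{\tilde\eta}$ of 50–50 mixtures. *)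

theory Defs
  imports Complex_Main
begin

definition Lam :: "nat set" where "Lam = {0, 1}"

definition is_distr :: "(nat \<Rightarrow> real) \<Rightarrow> bool" where
  "is_distr \<mu> \<longleftrightarrow> (\<forall>i\<in>Lam. 0 \<le> \<mu> i) \<and> (\<Sum>i\<in>Lam. \<mu> i) = 1"

definition xi_pass :: "real \<Rightarrow> nat \<Rightarrow> nat \<Rightarrow> real" where
  "xi_pass q i j = (if i = j then 1 else q)"

definition two_copy_pass :: "real \<Rightarrow> (nat \<Rightarrow> real) \<Rightarrow> (nat \<Rightarrow> real) \<Rightarrow> real" where
  "two_copy_pass q \<mu> \<nu> = (\<Sum>i\<in>Lam. \<Sum>j\<in>Lam. xi_pass q i j * \<mu> i * \<nu> j)"

definition p_pur :: "real \<Rightarrow> (nat \<Rightarrow> real) \<Rightarrow> real" where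
  "p_pur q \<mu>T = two_copy_pass q \<mu>T \<mu>T"

definition relabel_swap :: "(nat \<Rightarrow> real) \<Rightarrow> nat \<Rightarrow> real" where
  "relabel_swap \<mu> i = \<mu> (1 - i)"

definition D_op :: "real \<Rightarrow> real \<Rightarrow> real \<Rightarrow> (nat \<Rightarrow> real) \<Rightarrow> (nat \<Rightarrow> real) \<Rightarrow> real" where
  "D_op q \<eta>1 \<eta>2 \<mu>T \<mu>\<eta> =
     (let s = 2 * sqrt (\<eta>1 * \<eta>2 * (1 - p_pur q \<mu>T)) in
      max ((2 * two_copy_pass q \<mu>T \<mu>\<eta> - 1) + s)
          ((2 * two_copy_pass q \<mu>T (relabel_swap \<mu>\<eta>) - 1) + s))"

end

theory Submission
  imports Defs
begin

text \<open>
  Sharpness of the test forces point masses: \<open>\<xi>T\<close> equals 1 on the support of \<open>\<mu>T\<close>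
  and 0 on the support of \<open>\<mu>Tt\<close>, so on the two-element ontic space \<open>\<mu>T\<close> is the point
  mass at some state \<open>k\<close> and \<open>\<xi>T\<close> is the indicator of \<open>k\<close>. Hence \<open>p_pur = 1\<close>, the
  square-root term vanishes whatever the priors, and \<open>c = \<mu>\<eta> k\<close>. The two relabellings
  give \<open>2 p_mix - 1\<close> equal to \<open>1 - 2(1 - q)(1 - c)\<close> and \<open>1 - 2(1 - q)c\<close>, whose maximum
  is the bound, attained with equality.
\<close>

lemma response_eq_1_on_support:
  fixes \<mu> \<xi> :: "'a \<Rightarrow> real"
  assumes "finite A" and "\<forall>i\<in>A. 0 \<le> \<mu> i" and "(\<Sum>i\<in>A. \<mu> i) = 1"
    and "\<forall>i\<in>A. \<xi> i \<le> 1" and "(\<Sum>i\<in>A. \<xi> i * \<mu> i) = 1"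
    and "i \<in> A" and "\<mu> i \<noteq> 0"
  shows "\<xi> i = 1"
proof -
  have "(\<Sum>i\<in>A. (1 - \<xi> i) * \<mu> i) = 0"
    using assms(3,5) by (simp add: left_diff_distrib sum_subtractf)
  moreover have "\<forall>i\<in>A. 0 \<le> (1 - \<xi> i) * \<mu> i"
    using assms(2,4) by (simp add: mult_nonneg_nonneg)
  ultimately have "(1 - \<xi> i) * \<mu> i = 0"
    using assms(1,6) sum_nonneg_eq_0_iff[of A "\<lambda>i. (1 - \<xi> i) * \<mu> i"] by simp
  then show ?thesis using assms(7) by simp
qed

lemma response_eq_0_on_support:
  fixes \<mu> \<xi> :: "'a \<Rightarrow> real"
  assumes "finite A" and "\<forall>i\<in>A. 0 \<le> \<mu> i" and "\<forall>i\<in>A. 0 \<le> \<xi> i"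
    and "(\<Sum>i\<in>A. \<xi> i * \<mu> i) = 0" and "i \<in> A" and "\<mu> i \<noteq> 0"
  shows "\<xi> i = 0"
proof -
  have "\<xi> i * \<mu> i = 0"
    using assms(1-5) sum_nonneg_eq_0_iff[of A "\<lambda>i. \<xi> i * \<mu> i"] by simp
  then show ?thesis using assms(6) by simp
qed

lemma Lam_eq_other:
  assumes "k \<in> Lam"
  shows "Lam = {k, 1 - k}" and "1 - k \<noteq> k" and "1 - (1 - k) = k"
  using assms by (auto simp: Lam_def)

lemma sum_Lam_other:
  assumes "k \<in> Lam"
  shows "(\<Sum>i\<in>Lam. f i) = f k + f (1 - k)"
  using assms by (auto simp: Lam_def add.commute)

lemma is_distr_other:
  assumes "is_distr \<mu>" and "k \<in> Lam"
  shows "\<mu> (1 - k) = 1 - \<mu> k"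
  using assms sum_Lam_other[OF assms(2), of \<mu>] by (simp add: is_distr_def)

lemma sharp_test_point_mass:
  fixes \<mu> \<nu> \<xi> :: "nat \<Rightarrow> real"
  assumes \<mu>: "is_distr \<mu>" and \<nu>: "is_distr \<nu>"
    and \<xi>: "\<forall>i\<in>Lam. 0 \<le> \<xi> i \<and> \<xi> i \<le> 1"
    and pass: "(\<Sum>i\<in>Lam. \<xi> i * \<mu> i) = 1" and fail: "(\<Sum>i\<in>Lam. \<xi> i * \<nu> i) = 0"
  obtains k where "k \<in> Lam" and "\<mu> k = 1" and "\<mu> (1 - k) = 0"
    and "\<xi> k = 1" and "\<xi> (1 - k) = 0"
proof -
  have fin: "finite Lam" by (simp add: Lam_def)
  from \<mu> have \<mu>_nonneg: "\<forall>i\<in>Lam. 0 \<le> \<mu> i" and \<mu>_sum: "(\<Sum>i\<in>Lam. \<mu> i) = 1"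
    by (simp_all add: is_distr_def)
  from \<nu> have \<nu>_nonneg: "\<forall>i\<in>Lam. 0 \<le> \<nu> i" by (simp add: is_distr_def)
  note on_supp_\<mu> = response_eq_1_on_support[OF fin \<mu>_nonneg \<mu>_sum _ pass]
  note on_supp_\<nu> = response_eq_0_on_support[OF fin \<nu>_nonneg _ fail]
  obtain k where k: "k \<in> Lam" "\<mu> k \<noteq> 0"
    using \<mu>_sum by (metis sum.neutral zero_neq_one)
  have k': "1 - k \<in> Lam" using Lam_eq_other(1)[OF k(1)] by blast
  have "\<xi> k = 1" using on_supp_\<mu>[OF _ k] \<xi> by blast
  then have "\<nu> k = 0" using on_supp_\<nu>[OF _ k(1)] \<xi> by force
  then have "\<nu> (1 - k) \<noteq> 0" using is_distr_other[OF \<nu> k(1)] by simp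
  then have "\<xi> (1 - k) = 0" using on_supp_\<nu>[OF _ k'] \<xi> by blast
  then have "\<mu> (1 - k) = 0" using on_supp_\<mu>[OF _ k'] \<xi> by force
  then show ?thesis
    using that k(1) \<open>\<xi> k = 1\<close> \<open>\<xi> (1 - k) = 0\<close> is_distr_other[OF \<mu> k(1)] by simp
qed

lemma two_copy_pass_point_mass:
  assumes "k \<in> Lam" and "\<mu> k = 1" and "\<mu> (1 - k) = 0"
  shows "two_copy_pass q \<mu> \<nu> = \<nu> k + q * \<nu> (1 - k)"
  using assms Lam_eq_other[OF assms(1)]
  by (simp add: two_copy_pass_def sum_Lam_other[OF assms(1)] xi_pass_def)

lemma max_one_minus_eq_min:
  fixes t c :: real
  assumes "0 \<le> t"
  shows "max (1 - t * (1 - c)) (1 - t * c) = 1 - t * min c (1 - c)"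
  using assms mult_left_mono[of c "1 - c" t] mult_left_mono[of "1 - c" c t]
  by (auto simp: max_def min_def)

lemma D_op_point_mass:
  assumes "k \<in> Lam" and "\<mu>T k = 1" and "\<mu>T (1 - k) = 0"
    and "is_distr \<mu>\<eta>" and "q \<le> 1"
  shows "D_op q \<eta>1 \<eta>2 \<mu>T \<mu>\<eta> = 1 - 2 * (1 - q) * min (\<mu>\<eta> k) (1 - \<mu>\<eta> k)"
proof -
  note pass = two_copy_pass_point_mass[OF assms(1-3), of q]
  have "p_pur q \<mu>T = 1" using pass assms(2,3) by (simp add: p_pur_def)
  moreover have "2 * two_copy_pass q \<mu>T \<mu>\<eta> - 1 = 1 - 2 * (1 - q) * (1 - \<mu>\<eta> k)"
    unfolding pass is_distr_other[OF assms(4,1)] by (simp add: algebra_simps)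
  moreover have "2 * two_copy_pass q \<mu>T (relabel_swap \<mu>\<eta>) - 1 = 1 - 2 * (1 - q) * \<mu>\<eta> k"
    unfolding pass relabel_swap_def Lam_eq_other(3)[OF assms(1)] is_distr_other[OF assms(4,1)]
    by (simp add: algebra_simps)
  ultimately show ?thesis
    using max_one_minus_eq_min[of "2 * (1 - q)" "\<mu>\<eta> k"] assms(5)
    by (simp add: D_op_def)
qed

theorem theorem1:
  fixes \<mu>T \<mu>Tt \<mu>\<eta> \<mu>\<eta>t \<xi>T :: "nat \<Rightarrow> real" and q \<eta>1 \<eta>2 c :: real
  assumes "is_distr \<mu>T" and "is_distr \<mu>Tt" and "is_distr \<mu>\<eta>" and "is_distr \<mu>\<eta>t"
    and "\<forall>i\<in>Lam. \<mu>T i + \<mu>Tt i = \<mu>\<eta> i + \<mu>\<eta>t i"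
    and "0 \<le> q" and "q < 1"
    and "\<forall>i\<in>Lam. 0 \<le> \<xi>T i \<and> \<xi>T i \<le> 1"
    and "(\<Sum>i\<in>Lam. \<xi>T i * \<mu>T i) = 1"
    and "(\<Sum>i\<in>Lam. \<xi>T i * \<mu>Tt i) = 0"
    and "c = (\<Sum>i\<in>Lam. \<xi>T i * \<mu>\<eta> i)"
    and "0 \<le> \<eta>1" and "0 \<le> \<eta>2" and "\<eta>1 + \<eta>2 = 1"
  shows "D_op q \<eta>1 \<eta>2 \<mu>T \<mu>\<eta> \<le> 1 - 2 * (1 - q) * min c (1 - c)"
proof -
  obtain k where k: "k \<in> Lam" "\<mu>T k = 1" "\<mu>T (1 - k) = 0" "\<xi>T k = 1" "\<xi>T (1 - k) = 0"
    using sharp_test_point_mass[OF assms(1,2,8,9,10)] .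
  have "c = \<mu>\<eta> k" using k(4,5) unfolding assms(11) sum_Lam_other[OF k(1)] by simp
  then show ?thesis using D_op_point_mass[OF k(1-3) assms(3)] assms(7) by simp
qed

end
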